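(* Let $d>0$, let $\mathcal{S}$ be the 4-PAM constellation labeled by any Gray labeling $\Phi_{\mathcal{S}}$, and let $\mathcal{B}\subset\{0,1\}^{2N}$ be any binary linear code with at least two codewords. Then $\mathsf{L}(\mathcal{B})\le 1.25$ dB. Moreover, there exist a Gray labeling and a binary linear code $\mathcal{B}$ for which this bound is attained, i.e., $\mathsf{L}(\mathcal{B})=20\log_{10}(2/\sqrt{3})\approx 1.25$ dB.
   Context: $\mathcal{S}=\{s_1,s_2,s_3,s_4\}$ with $s_1=-3d$, $s_2=-d$, $s_3=d$, $s_4=3d$. A labeling is a bijection $\Phi_{\mathcal{S}}:\{0,1\}^2\to\mathcal{S}$, described by $\boldsymbol{q}=[q_1,\dots,q_4]$ where $q_i$ is the integer whose two-bit representation (most significant bit first) is $\Phi_{\mathcal{S}}^{-1}(s_i)$; the Gray labelings are $[0,1,3,2]$, $[0,2,3,1]$, $[1,0,2,3]$, $[2,0,1,3]$. A codeword of $\mathcal{B}$ is written $\boldsymbol{b}=[\boldsymbol{b}[1],\dots,\boldsymbol{b}[N]]$ with $\boldsymbol{b}[k]=[b_1[k],b_2[k]]$, and the CM code is $\mathcal{X}=\{[\Phi_{\mathcal{S}}(\boldsymbol{b}[1]),\dots,\Phi_{\mathcal{S}}(\boldsymbol{b}[N])]:\boldsymbol{b}\in\mathcal{B}\}$. For $\boldsymbol{x},\hat{\boldsymbol{x}}\in\mathcal{S}^N$ and each $k$ with $x[k]\neq\hat{x}[k]$: $\mu^{\mathcal{X}}_k=\sigma^{2,\mathcal{X}}_k=(x[k]-\hat{x}[k])^2/(4d^2)$;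 $\mu^{\mathcal{B}}_k=\sigma^{2,\mathcal{B}}_k=(x[k]-\hat{x}[k])^2/(4d^2)$ except that if $\{x[k],\hat{x}[k]\}=\{s_1,s_4\}$ then $\mu^{\mathcal{B}}_k=3$, $\sigma^{2,\mathcal{B}}_k=1$. Summing over $k$ with $x[k]\neq\hat{x}[k]$, $a^{\mathcal{X}}(\boldsymbol{x},\hat{\boldsymbol{x}})=\sum_k\mu^{\mathcal{X}}_k/\sqrt{\sum_k\sigma^{2,\mathcal{X}}_k}$ and $a^{\mathcal{B}}(\boldsymbol{x},\hat{\boldsymbol{x}})=\sum_k\mu^{\mathcal{B}}_k/\sqrt{\sum_k\sigma^{2,\mathcal{B}}_k}$ (normalized distances of the symbol-wise ML decoder and of the bit-wise max-log decoder under the zero-crossing approximation). The asymptotic loss of the code is $\mathsf{L}(\mathcal{B})=20\log_{10}\Big(\min_{\boldsymbol{x}\neq\hat{\boldsymbol{x}}\in\mathcal{X}}a^{\mathcal{X}}(\boldsymbol{x},\hat{\boldsymbol{x}})\big/\min_{\boldsymbol{x}\neq\hat{\boldsymbol{x}}\in\mathcal{X}}a^{\mathcal{B}}(\boldsymbol{x},\hat{\boldsymbol{x}})\Big)$ dB. *)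

theory Defs
  imports Complex_Main
begin

text \<open>Constellation points s_1 = -3d, s_2 = -d, s_3 = d, s_4 = 3d (index i in 1..4).\<close>
definition pam :: "real \<Rightarrow> nat \<Rightarrow> real" where
  "pam d i = (2 * real i - 5) * d"

text \<open>A labeling is given by q = [q_1,...,q_4] (a list, q_i = q ! (i-1)); the Gray labelings.\<close>
definition gray_labelings :: "nat list set" where
  "gray_labelings = {[0,1,3,2], [0,2,3,1], [1,0,2,3], [2,0,1,3]}"

text \<open>Phi(b1,b2) = s_i where q_i is the integer with two-bit representation b1 b2 (MSB first).\<close>
definition Phi :: "real \<Rightarrow> nat list \<Rightarrow> bool \<times> bool \<Rightarrow> real" where
  "Phi d q b = pam d (THE i. i \<in> {1..4} \<and> q ! (i - 1) = 2 * of_bool (fst b) + of_bool (snd b))"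

definition binwords :: "nat \<Rightarrow> (nat \<Rightarrow> bool) set" where
  "binwords n = {c. \<forall>i\<ge>n. \<not> c i}"

definition binary_linear_code :: "nat \<Rightarrow> (nat \<Rightarrow> bool) set \<Rightarrow> bool" where
  "binary_linear_code n B \<longleftrightarrow> B \<subseteq> binwords n \<and> (\<lambda>_. False) \<in> B \<and>
     (\<forall>x\<in>B. \<forall>y\<in>B. (\<lambda>i. x i \<noteq> y i) \<in> B)"

text \<open>Codeword c of length 2N: b[k] = [b_1[k], b_2[k]] = [c(2k), c(2k+1)] for k = 0..N-1
  (0-based positions). The CM image, a real vector of length N (0 outside positions < N).\<close>
definition modulate :: "real \<Rightarrow> nat list \<Rightarrow> nat \<Rightarrow> (nat \<Rightarrow> bool) \<Rightarrow> (nat \<Rightarrow> real)" where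
  "modulate d q N c = (\<lambda>k. if k < N then Phi d q (c (2 * k), c (2 * k + 1)) else 0)"

definition cm_code :: "real \<Rightarrow> nat list \<Rightarrow> nat \<Rightarrow> (nat \<Rightarrow> bool) set \<Rightarrow> (nat \<Rightarrow> real) set" where
  "cm_code d q N B = modulate d q N ` B"

definition diff_pos :: "nat \<Rightarrow> (nat \<Rightarrow> real) \<Rightarrow> (nat \<Rightarrow> real) \<Rightarrow> nat set" where
  "diff_pos N x y = {k. k < N \<and> x k \<noteq> y k}"

definition muX :: "real \<Rightarrow> real \<Rightarrow> real \<Rightarrow> real" where
  "muX d u v = (u - v)^2 / (4 * d^2)"

definition sigX :: "real \<Rightarrow> real \<Rightarrow> real \<Rightarrow> real" where
  "sigX d u v = (u - v)^2 / (4 * d^2)"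

definition muB :: "real \<Rightarrow> real \<Rightarrow> real \<Rightarrow> real" where
  "muB d u v = (if {u, v} = {pam d 1, pam d 4} then 3 else (u - v)^2 / (4 * d^2))"

definition sigB :: "real \<Rightarrow> real \<Rightarrow> real \<Rightarrow> real" where
  "sigB d u v = (if {u, v} = {pam d 1, pam d 4} then 1 else (u - v)^2 / (4 * d^2))"

definition aX :: "real \<Rightarrow> nat \<Rightarrow> (nat \<Rightarrow> real) \<Rightarrow> (nat \<Rightarrow> real) \<Rightarrow> real" where
  "aX d N x y = (\<Sum>k\<in>diff_pos N x y. muX d (x k) (y k)) /
                 sqrt (\<Sum>k\<in>diff_pos N x y. sigX d (x k) (y k))"

definition aB :: "real \<Rightarrow> nat \<Rightarrow> (nat \<Rightarrow> real) \<Rightarrow> (nat \<Rightarrow> real) \<Rightarrow> real" where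
  "aB d N x y = (\<Sum>k\<in>diff_pos N x y. muB d (x k) (y k)) /
                 sqrt (\<Sum>k\<in>diff_pos N x y. sigB d (x k) (y k))"

definition loss :: "real \<Rightarrow> nat list \<Rightarrow> nat \<Rightarrow> (nat \<Rightarrow> bool) set \<Rightarrow> real" where
  "loss d q N B =
     (let X = cm_code d q N B in
      20 * log 10 (Min {aX d N x y | x y. x \<in> X \<and> y \<in> X \<and> x \<noteq> y} /
                   Min {aB d N x y | x y. x \<in> X \<and> y \<in> X \<and> x \<noteq> y}))"

end

theory Submission
  imports Defs
begin

text \<open>Fix two distinct points of the CM code and let S be the set of positions where one carries
  s_1 and the other s_4 (the only positions where the max-log metrics differ from the exact ones),
  n = card S, and A the sum of the squared normalized distances over the remaining differing
  positions. Then the symbol-wise normalized distance is sqrt (A + 9n) and the bit-wise one is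
  (A + 3n) / sqrt (A + n); their ratio is at most 2 / sqrt 3 because
  4 (A + 3n)^2 - 3 (A + 9n)(A + n) = (A - 3n)^2. Equality needs A = 3n, realized by a two-word
  code whose images differ by (s_1, s_4) in one position and by (s_1, s_2) in three.\<close>

lemma pam_eq_iff: "d > 0 \<Longrightarrow> pam d i = pam d j \<longleftrightarrow> i = j"
  by (simp add: pam_def)

lemma gray_labeling_permutation:
  assumes "q \<in> gray_labelings"
  shows "distinct q" "set q = {..<4}"
  using assms by (auto simp: gray_labelings_def)

lemma Phi_eq_pam:
  assumes "distinct q" "set q = {..<4}" "i < 4"
    and "q ! i = 2 * of_bool (fst b) + of_bool (snd b)"
  shows "Phi d q b = pam d (Suc i)"
proof -
  have len: "length q = 4"
    using distinct_card[OF assms(1)] assms(2) by simp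
  have "(THE j. j \<in> {1..4} \<and> q ! (j - 1) = 2 * of_bool (fst b) + of_bool (snd b)) = Suc i"
  proof (rule the_equality)
    fix j assume "j \<in> {1..4} \<and> q ! (j - 1) = 2 * of_bool (fst b) + of_bool (snd b)"
    then have "q ! (j - 1) = q ! i" "j - 1 < length q"
      using assms(4) len by auto
    then have "j - 1 = i"
      using nth_eq_iff_index_eq[OF assms(1)] assms(3) len by auto
    then show "j = Suc i" using \<open>j \<in> {1..4} \<and> _\<close> by auto
  qed (use assms(3,4) in auto)
  then show ?thesis unfolding Phi_def by simp
qed

lemma Phi_inj:
  assumes "d > 0" "distinct q" "set q = {..<4}"
  shows "inj (Phi d q)"
proof (rule injI)
  have label: "\<exists>i<4. q ! i = 2 * of_bool (fst b) + of_bool (snd b)" for b :: "bool \<times> bool"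
  proof -
    have "2 * of_bool (fst b) + of_bool (snd b) \<in> set q"
      using assms(3) by (cases "fst b"; cases "snd b") auto
    then show ?thesis
      using assms(2,3) distinct_card[OF assms(2)] by (auto simp: in_set_conv_nth)
  qed
  fix a b assume eq: "Phi d q a = Phi d q b"
  obtain i j where ij: "i < 4" "q ! i = 2 * of_bool (fst a) + of_bool (snd a)"
    "j < 4" "q ! j = 2 * of_bool (fst b) + of_bool (snd b)"
    using label by blast
  have "i = j"
    using eq Phi_eq_pam[OF assms(2,3) ij(1,2)] Phi_eq_pam[OF assms(2,3) ij(3,4)]
      pam_eq_iff[OF assms(1)] by simp
  then show "a = b"
    using ij by (cases a; cases b) (auto split: if_splits simp: of_bool_def)
qed

lemma modulate_inj_on:
  assumes "d > 0" "distinct q" "set q = {..<4}"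
  shows "inj_on (modulate d q N) (binwords (2 * N))"
proof (rule inj_onI)
  fix b c assume bc: "b \<in> binwords (2 * N)" "c \<in> binwords (2 * N)"
    and eq: "modulate d q N b = modulate d q N c"
  show "b = c"
  proof
    fix i
    show "b i = c i"
    proof (cases "i < 2 * N")
      case True
      define k where "k = i div 2"
      have "k < N" "i = 2 * k \<or> i = 2 * k + 1"
        using True unfolding k_def by presburger+
      then have "Phi d q (b (2 * k), b (2 * k + 1)) = Phi d q (c (2 * k), c (2 * k + 1))"
        using fun_cong[OF eq, of k] by (simp add: modulate_def)
      then have "b (2 * k) = c (2 * k) \<and> b (2 * k + 1) = c (2 * k + 1)"
        using Phi_inj[OF assms] by (auto dest: injD)
      with \<open>i = 2 * k \<or> i = 2 * k + 1\<close> show ?thesis by auto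
    qed (use bc in \<open>auto simp: binwords_def\<close>)
  qed
qed

lemma sqrt3_half_sqrt_le:
  fixes A n :: real
  assumes "0 \<le> A" "0 \<le> n" "0 < A + n"
  shows "sqrt 3 / 2 * sqrt (A + 9 * n) \<le> (A + 3 * n) / sqrt (A + n)"
proof -
  have "3 * (A + 9 * n) * (A + n) \<le> (2 * (A + 3 * n))^2"
    using zero_le_power2[of "A - 3 * n"] by (simp add: power2_eq_square algebra_simps)
  then have "sqrt 3 * sqrt (A + 9 * n) * sqrt (A + n) \<le> 2 * (A + 3 * n)"
    using assms real_sqrt_le_mono by (fastforce simp: real_sqrt_mult[symmetric])
  then show ?thesis
    using assms by (simp add: field_simps)
qed

lemma muX_pos: "d > 0 \<Longrightarrow> u \<noteq> v \<Longrightarrow> 0 < muX d u v"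
  by (simp add: muX_def)

definition outer_positions ::
    "real \<Rightarrow> nat set \<Rightarrow> (nat \<Rightarrow> real) \<Rightarrow> (nat \<Rightarrow> real) \<Rightarrow> nat set" where
  "outer_positions d D x y = {k\<in>D. {x k, y k} = {pam d 1, pam d 4}}"

lemma distance_sums_split:
  fixes x y :: "nat \<Rightarrow> real"
  assumes "d > 0" "finite D"
  defines "A \<equiv> \<Sum>k\<in>D - outer_positions d D x y. muX d (x k) (y k)"
  defines "S \<equiv> outer_positions d D x y"
  shows "(\<Sum>k\<in>D. muX d (x k) (y k)) = A + 9 * card S"
    and "(\<Sum>k\<in>D. muB d (x k) (y k)) = A + 3 * card S"
    and "(\<Sum>k\<in>D. sigB d (x k) (y k)) = A + card S"
proof -
  have fin: "finite S" "S \<subseteq> D" using assms(2) unfolding S_def outer_positions_def by auto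
  have split: "(\<Sum>k\<in>D. f k) = (\<Sum>k\<in>S. f k) + (\<Sum>k\<in>D - S. f k)" for f :: "nat \<Rightarrow> real"
    using sum.subset_diff[OF fin(2) assms(2)] by (simp add: add.commute)
  have "muX d (x k) (y k) = 9" if "k \<in> S" for k
  proof -
    have "(x k - y k)^2 = (6 * d)^2"
      using that unfolding S_def outer_positions_def
      by (auto simp: pam_def doubleton_eq_iff power2_eq_square)
    then show ?thesis using assms(1) by (simp add: muX_def power2_eq_square)
  qed
  then show "(\<Sum>k\<in>D. muX d (x k) (y k)) = A + 9 * card S"
    unfolding A_def S_def[symmetric] split[of "\<lambda>k. muX d (x k) (y k)"] by simp
  have "muB d (x k) (y k) = muX d (x k) (y k)" "sigB d (x k) (y k) = muX d (x k) (y k)"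
    if "k \<in> D - S" for k
    using that unfolding S_def outer_positions_def muB_def sigB_def muX_def by auto
  moreover have "muB d (x k) (y k) = 3" "sigB d (x k) (y k) = 1" if "k \<in> S" for k
    using that unfolding S_def outer_positions_def muB_def sigB_def by auto
  ultimately show "(\<Sum>k\<in>D. muB d (x k) (y k)) = A + 3 * card S"
    and "(\<Sum>k\<in>D. sigB d (x k) (y k)) = A + card S"
    unfolding A_def S_def[symmetric] split[of "\<lambda>k. muB d (x k) (y k)"]
      split[of "\<lambda>k. sigB d (x k) (y k)"] by simp_all
qed

lemma normalized_distance_bound:
  assumes "d > 0" "diff_pos N x y \<noteq> {}"
  shows "0 < aX d N x y" and "sqrt 3 / 2 * aX d N x y \<le> aB d N x y"
proof -
  define D where "D = diff_pos N x y"
  define S where "S = outer_positions d D x y"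
  define A where "A = (\<Sum>k\<in>D - S. muX d (x k) (y k))"
  have fin: "finite D" unfolding D_def diff_pos_def by simp
  note sums = distance_sums_split[OF assms(1) fin, of x y, folded S_def, folded A_def]
  have pos: "0 < muX d (x k) (y k)" if "k \<in> D" for k
    using that muX_pos[OF assms(1)] unfolding D_def diff_pos_def by blast
  have A: "0 \<le> A" unfolding A_def using pos by (intro sum_nonneg) (simp add: less_imp_le)
  have "0 < A + card S"
  proof (cases "S = {}")
    case True
    then have "0 < A" unfolding A_def using pos assms(2) fin by (simp add: D_def sum_pos)
    then show ?thesis by simp
  next
    case False
    then have "0 < card S"
      using fin unfolding S_def outer_positions_def by (simp add: card_gt_0_iff)
    then show ?thesis using A by simp
  qed
  moreover have aX: "aX d N x y = sqrt (A + 9 * card S)"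
    using sums(1) A unfolding aX_def sigX_def muX_def[symmetric] D_def[symmetric]
    by (simp add: real_div_sqrt)
  ultimately show "0 < aX d N x y" by simp
  show "sqrt 3 / 2 * aX d N x y \<le> aB d N x y"
    using sqrt3_half_sqrt_le[OF A _ \<open>0 < A + card S\<close>] sums(2,3)
    unfolding aX aB_def D_def[symmetric] by simp
qed

lemma Min_ratio_le:
  fixes f g :: "'a \<Rightarrow> real"
  assumes "finite P" "P \<noteq> {}" "0 < c" "\<And>p. p \<in> P \<Longrightarrow> 0 < f p \<and> c * f p \<le> g p"
  shows "0 < Min (f ` P) / Min (g ` P)" and "Min (f ` P) / Min (g ` P) \<le> 1 / c"
proof -
  have "Min (g ` P) \<in> g ` P" using assms(1,2) by simp
  then obtain p0 where p0: "p0 \<in> P" "Min (g ` P) = g p0" by auto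
  have "Min (f ` P) \<in> f ` P" using assms(1,2) by simp
  then have f_pos: "0 < Min (f ` P)" using assms(4) by auto
  have "Min (f ` P) \<le> f p0" using assms(1) p0(1) by simp
  also have "\<dots> \<le> Min (g ` P) / c"
    using assms(3) assms(4)[OF p0(1)] p0(2) by (simp add: field_simps)
  finally have le: "Min (f ` P) \<le> Min (g ` P) / c" .
  with f_pos have "0 < Min (g ` P) / c" by linarith
  with assms(3) have g_pos: "0 < Min (g ` P)" by (simp add: zero_less_divide_iff)
  show "0 < Min (f ` P) / Min (g ` P)" using f_pos g_pos by simp
  show "Min (f ` P) / Min (g ` P) \<le> 1 / c"
    using le g_pos assms(3) by (simp add: field_simps)
qed

lemma diff_pos_nonempty:
  assumes "x \<noteq> y" "\<And>k. N \<le> k \<Longrightarrow> x k = y k"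
  shows "diff_pos N x y \<noteq> {}"
proof -
  obtain k where k: "x k \<noteq> y k" using assms(1) by (meson ext)
  then have "k < N" using assms(2) not_le by blast
  then show ?thesis using k unfolding diff_pos_def by blast
qed

lemma loss_eq_Min_ratio:
  fixes d :: real and q N B
  defines "P \<equiv> {(x, y). x \<in> cm_code d q N B \<and> y \<in> cm_code d q N B \<and> x \<noteq> y}"
  shows "loss d q N B =
    20 * log 10 (Min ((\<lambda>(x, y). aX d N x y) ` P) / Min ((\<lambda>(x, y). aB d N x y) ` P))"
proof -
  have "{f x y | x y. x \<in> X \<and> y \<in> X \<and> x \<noteq> y}
      = (\<lambda>(x, y). f x y) ` {(x, y). x \<in> X \<and> y \<in> X \<and> x \<noteq> y}"
    for f :: "(nat \<Rightarrow> real) \<Rightarrow> (nat \<Rightarrow> real) \<Rightarrow> real" and X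
    by auto
  then show ?thesis unfolding loss_def Let_def P_def by simp
qed

lemma loss_upper_bound:
  assumes "d > 0" "distinct q" "set q = {..<4}" "B \<subseteq> binwords (2 * N)" "2 \<le> card B"
  shows "loss d q N B \<le> 20 * log 10 (2 / sqrt 3)"
proof -
  define X where "X = cm_code d q N B"
  define P where "P = {(x, y). x \<in> X \<and> y \<in> X \<and> x \<noteq> y}"
  have "finite B" using assms(5) card.infinite by force
  then have "finite (X \<times> X)" unfolding X_def cm_code_def by simp
  then have "finite P" unfolding P_def by (rule rev_finite_subset) auto
  have "card X = card B"
    unfolding X_def cm_code_def
    using card_image inj_on_subset[OF modulate_inj_on[OF assms(1-3)] assms(4)] by blast
  moreover have "finite X" unfolding X_def cm_code_def using \<open>finite B\<close> by simp
  ultimately obtain x y where "x \<in> X" "y \<in> X" "x \<noteq> y"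
    using assms(5) card_le_Suc0_iff_eq[of X] by auto
  then have "P \<noteq> {}" unfolding P_def by blast
  have "0 < aX d N x y \<and> sqrt 3 / 2 * aX d N x y \<le> aB d N x y" if "(x, y) \<in> P" for x y
  proof -
    have "\<And>k. N \<le> k \<Longrightarrow> x k = y k"
      using that unfolding P_def X_def cm_code_def modulate_def by auto
    then show ?thesis
      using normalized_distance_bound[OF assms(1) diff_pos_nonempty] that unfolding P_def by blast
  qed
  then have "0 < Min ((\<lambda>(x, y). aX d N x y) ` P) / Min ((\<lambda>(x, y). aB d N x y) ` P)"
    and "Min ((\<lambda>(x, y). aX d N x y) ` P) / Min ((\<lambda>(x, y). aB d N x y) ` P) \<le> 2 / sqrt 3"
    using Min_ratio_le[OF \<open>finite P\<close> \<open>P \<noteq> {}\<close>, of "sqrt 3 / 2"] by auto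
  then show ?thesis
    unfolding loss_eq_Min_ratio P_def X_def by simp
qed

lemma aX_commute: "aX d N x y = aX d N y x"
  and aB_commute: "aB d N x y = aB d N y x"
proof -
  have "diff_pos N x y = diff_pos N y x" unfolding diff_pos_def by auto
  moreover have "muX d u v = muX d v u" "sigX d u v = sigX d v u"
    "muB d u v = muB d v u" "sigB d u v = sigB d v u" for u v
    unfolding muX_def sigX_def muB_def sigB_def by (simp_all add: power2_commute insert_commute)
  ultimately show "aX d N x y = aX d N y x" "aB d N x y = aB d N y x"
    unfolding aX_def aB_def by simp_all
qed

lemma loss_two_point_code:
  assumes "cm_code d q N B = {x, y}" "x \<noteq> y"
  shows "loss d q N B = 20 * log 10 (aX d N x y / aB d N x y)"
proof -
  have "{f x' y' | x' y'. x' \<in> {x, y} \<and> y' \<in> {x, y} \<and> x' \<noteq> y'} = {f x y}"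
    if "f y x = f x y" for f :: "(nat \<Rightarrow> real) \<Rightarrow> (nat \<Rightarrow> real) \<Rightarrow> real"
    using assms(2) that by auto
  then show ?thesis
    unfolding loss_def Let_def assms(1) using aX_commute aB_commute by simp
qed

lemma binary_linear_code_single_generator:
  "c \<in> binwords n \<Longrightarrow> binary_linear_code n {\<lambda>_. False, c}"
  unfolding binary_linear_code_def binwords_def by auto

definition witness_word :: "nat \<Rightarrow> bool" where
  "witness_word i \<longleftrightarrow> i \<in> {0, 3, 5, 7}"

lemma modulate_witness_words:
  assumes "d > 0"
  shows "k < 4 \<Longrightarrow> modulate d [0, 1, 3, 2] 4 (\<lambda>_. False) k = -3 * d"
    and "modulate d [0, 1, 3, 2] 4 witness_word 0 = 3 * d"
    and "k \<in> {1, 2, 3} \<Longrightarrow> modulate d [0, 1, 3, 2] 4 witness_word k = -d"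
proof -
  have perm: "distinct [0, 1, 3, 2::nat]" "set [0, 1, 3, 2::nat] = {..<4}" by auto
  have Phi: "Phi d [0, 1, 3, 2] (False, False) = -3 * d" "Phi d [0, 1, 3, 2] (True, False) = 3 * d"
    "Phi d [0, 1, 3, 2] (False, True) = -d"
    using Phi_eq_pam[OF perm, where i = 0 and b = "(False, False)"]
      Phi_eq_pam[OF perm, where i = 3 and b = "(True, False)"]
      Phi_eq_pam[OF perm, where i = 1 and b = "(False, True)"]
    by (simp_all add: pam_def)
  show "k < 4 \<Longrightarrow> modulate d [0, 1, 3, 2] 4 (\<lambda>_. False) k = -3 * d"
    and "modulate d [0, 1, 3, 2] 4 witness_word 0 = 3 * d"
    and "k \<in> {1, 2, 3} \<Longrightarrow> modulate d [0, 1, 3, 2] 4 witness_word k = -d"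
    using Phi by (auto simp: modulate_def witness_word_def)
qed

lemma loss_witness_code:
  assumes d: "d > 0"
  shows "loss d [0, 1, 3, 2] 4 {\<lambda>_. False, witness_word} = 20 * log 10 (2 / sqrt 3)"
proof -
  define x0 where "x0 = modulate d [0, 1, 3, 2] 4 (\<lambda>_. False)"
  define x1 where "x1 = modulate d [0, 1, 3, 2] 4 witness_word"
  note x0 = modulate_witness_words(1)[OF d, folded x0_def]
    and x1_0 = modulate_witness_words(2)[OF d, folded x1_def]
    and x1 = modulate_witness_words(3)[OF d, folded x1_def]
  have "x0 k \<noteq> x1 k" if "k < 4" for k
  proof -
    have "k = 0 \<or> k \<in> {1, 2, 3}" using that by auto
    then show ?thesis using d x0[OF that] x1_0 x1 by auto
  qed
  then have "x0 \<noteq> x1" and D: "diff_pos 4 x0 x1 = {0, 1, 2, 3}"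
    unfolding diff_pos_def by force+
  have outer: "{-3 * d, 3 * d} = {pam d 1, pam d 4}" "{-3 * d, -d} \<noteq> {pam d 1, pam d 4}"
    using d by (auto simp: pam_def doubleton_eq_iff)
  have "muX d (-3 * d) (3 * d) = 9" "muB d (-3 * d) (3 * d) = 3" "sigB d (-3 * d) (3 * d) = 1"
    "muX d (-3 * d) (-d) = 1" "muB d (-3 * d) (-d) = 1" "sigB d (-3 * d) (-d) = 1"
    using d outer by (simp_all add: muX_def muB_def sigB_def power2_eq_square)
  then have "aX d 4 x0 x1 = 12 / sqrt 12" "aB d 4 x0 x1 = 3"
    unfolding aX_def aB_def sigX_def muX_def[symmetric] D using x0 x1_0 x1 by simp_all
  moreover have "12 / sqrt 12 / 3 = 2 / sqrt (3::real)"
  proof -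
    have "sqrt 12 = 2 * sqrt (3::real)" using real_sqrt_mult[of 4 3] by simp
    then show ?thesis by (simp add: field_simps)
  qed
  moreover have "cm_code d [0, 1, 3, 2] 4 {\<lambda>_. False, witness_word} = {x0, x1}"
    unfolding cm_code_def x0_def x1_def by simp
  ultimately show ?thesis using loss_two_point_code \<open>x0 \<noteq> x1\<close> by simp
qed

theorem corollary1:
  fixes d :: real
  assumes "d > 0"
  shows "(\<forall>q N B. q \<in> gray_labelings \<longrightarrow> binary_linear_code (2 * N) B \<longrightarrow> card B \<ge> 2 \<longrightarrow>
            loss d q N B \<le> 20 * log 10 (2 / sqrt 3))
       \<and> (\<exists>q N B. q \<in> gray_labelings \<and> binary_linear_code (2 * N) B \<and> card B \<ge> 2 \<and>
            loss d q N B = 20 * log 10 (2 / sqrt 3))"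
proof
  show "\<forall>q N B. q \<in> gray_labelings \<longrightarrow> binary_linear_code (2 * N) B \<longrightarrow> card B \<ge> 2 \<longrightarrow>
          loss d q N B \<le> 20 * log 10 (2 / sqrt 3)"
    using loss_upper_bound[OF assms gray_labeling_permutation] by (auto simp: binary_linear_code_def)
  have "witness_word 0" by (simp add: witness_word_def)
  then have "witness_word \<noteq> (\<lambda>_. False)" by (metis (full_types))
  then show "\<exists>q N B. q \<in> gray_labelings \<and> binary_linear_code (2 * N) B \<and> card B \<ge> 2 \<and>
          loss d q N B = 20 * log 10 (2 / sqrt 3)"
    using loss_witness_code[OF assms]
      binary_linear_code_single_generator[of witness_word "2 * 4"]
    by (intro exI[of _ "[0, 1, 3, 2]"] exI[of _ 4] exI[of _ "{\<lambda>_. False, witness_word}"])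
      (simp add: gray_labelings_def binwords_def witness_word_def)
qed

end
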